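(* ($I\Sigma_1$) If $X\subseteq\mathbb{N}$ is finite, $\omega^3$-large, and $\min X>3$, then $X$ is $\mathsf{fEM}_{<\infty}$-$\omega$-large.
   Context: $\alpha$-largeness for $\alpha<\omega^\omega$: writing ordinals in Cantor normal form, $0[m]=0$, $(\beta+1)[m]=\beta$, $(\beta+\omega^n)[m]=\beta+\omega^{n-1}\cdot m$ for $n\ge1$; a finite $\{x_0<\dots<x_{\ell-1}\}$ is $\alpha$-large if $\alpha[x_0]\cdots[x_{\ell-1}]=0$. A finite set $X$ is \emph{$\mathsf{fEM}_{<\infty}$-$\alpha$-large} if for every coloring $P:[X]^2\to\{0,\dots,\min X-1\}$ there is $Y\subseteq X$ which is $\alpha$-large and such that $P$ is fallow on $[Y]^2$, i.e. $P(x,z)\in\{P(x,y),P(y,z)\}$ for all $x<y<z$ in $Y$. *)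

theory Defs
  imports Main
begin

text \<open>Ordinals below omega^omega in Cantor normal form
  omega^e1 + ... + omega^ek (e1 >= ... >= ek), represented by the list [e1,...,ek]
  of exponents; the empty list is 0.\<close>

type_synonym ord_cnf = "nat list"

text \<open>Fundamental sequence: 0[m] = 0, (beta+1)[m] = beta,
  (beta + omega^n)[m] = beta + omega^(n-1) * m for n >= 1.\<close>
definition fund :: "ord_cnf \<Rightarrow> nat \<Rightarrow> ord_cnf" where
  "fund a m = (if a = [] then []
               else if last a = 0 then butlast a
               else butlast a @ replicate m (last a - 1))"

definition omega_pow :: "nat \<Rightarrow> ord_cnf" where
  "omega_pow n = [n]"

definition large :: "ord_cnf \<Rightarrow> nat set \<Rightarrow> bool" where
  "large a X \<longleftrightarrow> finite X \<and> foldl fund a (sorted_list_of_set X) = []"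

definition fallow_on :: "(nat \<Rightarrow> nat \<Rightarrow> nat) \<Rightarrow> nat set \<Rightarrow> bool" where
  "fallow_on P Y \<longleftrightarrow> (\<forall>x\<in>Y. \<forall>y\<in>Y. \<forall>z\<in>Y. x < y \<and> y < z \<longrightarrow>
       P x z = P x y \<or> P x z = P y z)"

definition fEM_large :: "ord_cnf \<Rightarrow> nat set \<Rightarrow> bool" where
  "fEM_large a X \<longleftrightarrow> finite X \<and>
     (\<forall>P :: nat \<Rightarrow> nat \<Rightarrow> nat.
        (\<forall>x\<in>X. \<forall>y\<in>X. x < y \<longrightarrow> P x y < Min X) \<longrightarrow>
        (\<exists>Y\<subseteq>X. large a Y \<and> fallow_on P Y))"

end

theory Submission
  imports Defs
begin

text \<open>An \<omega>^3-large set with minimum k \<ge> 2 has at least 2^2^(k+1) \<ge> k^(k+1) elements: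
  beyond k it splits into k \<omega>^2-large blocks, and an \<omega>^2-large block whose elements are
  all \<ge> m has at least 2^m elements. For a colouring with fewer than k colours, taking the
  least remaining element and keeping the largest colour class of its pairs to later
  elements, k + 1 times, yields a set Y containing k on which P x y depends only on x.
  Such a set is fallow, and it is \<omega>-large because |Y| > min Y.\<close>

lemma fund_append: "b \<noteq> [] \<Longrightarrow> fund (a @ b) x = a @ fund b x"
  by (simp add: fund_def butlast_append)

lemma fund_Suc_singleton: "fund [Suc e] x = replicate x e"
  by (simp add: fund_def)

lemma fund_replicate_0: "fund (replicate n 0) x = replicate (n - 1) 0"
  by (cases n) (simp_all add: fund_def flip: replicate_append_same)

lemma foldl_fund_replicate_0_eq_Nil_iff:
  "foldl fund (replicate n 0) xs = [] \<longleftrightarrow> n \<le> length xs"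
proof (induction xs arbitrary: n)
  case (Cons x xs)
  then show ?case by (simp add: fund_replicate_0 le_diff_conv)
qed simp

lemma foldl_fund_append_eq_NilD:
  assumes "foldl fund (a @ b) xs = []"
  shows "\<exists>ys zs. xs = ys @ zs \<and> foldl fund b ys = [] \<and> foldl fund a zs = []"
  using assms
proof (induction xs arbitrary: b)
  case Nil
  then show ?case by simp
next
  case (Cons x xs)
  show ?case
  proof (cases "b = []")
    case True
    then show ?thesis
      using Cons.prems by (intro exI[of _ "[]"] exI[of _ "x # xs"]) simp
  next
    case False
    then have "foldl fund (a @ fund b x) xs = []"
      using Cons.prems by (simp add: fund_append)
    from Cons.IH[OF this] obtain ys zs where
      "xs = ys @ zs" "foldl fund (fund b x) ys = []" "foldl fund a zs = []"
      by blast
    then show ?thesis by (intro exI[of _ "x # ys"] exI[of _ zs]) simp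
  qed
qed

lemma strict_sorted_append_ge:
  fixes m :: nat
  assumes "sorted_wrt (<) (ys @ zs)" "\<forall>x\<in>set (ys @ zs). m \<le> x" "z \<in> set zs"
  shows "m + length ys \<le> z"
  using assms
proof (induction ys arbitrary: m)
  case Nil
  then show ?case by simp
next
  case (Cons y ys)
  have "\<forall>x\<in>set (ys @ zs). Suc m \<le> x"
    using Cons.prems(1,2) by (auto intro: Suc_leI order.strict_trans1)
  with Cons.prems have "Suc m + length ys \<le> z" by (intro Cons.IH) simp_all
  then show ?case by simp
qed

lemma length_gt_if_foldl_fund_omega:
  assumes "foldl fund [1] xs = []" "\<forall>x\<in>set xs. m \<le> x"
  shows "m < length xs"
proof (cases xs)
  case Nil
  then show ?thesis using assms by simp
next
  case (Cons x rest)
  then have "foldl fund (replicate x 0) rest = []"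
    using assms fund_Suc_singleton[of 0 x] by simp
  then have "x \<le> length rest" by (simp add: foldl_fund_replicate_0_eq_Nil_iff)
  then show ?thesis using Cons assms by auto
qed

text \<open>The bound says (2^n - 1) * (m + 1) \<le> length xs, rearranged to avoid truncated subtraction.\<close>

lemma length_ge_if_foldl_fund_omega_times:
  assumes "sorted_wrt (<) xs" "\<forall>x\<in>set xs. m \<le> x" "foldl fund (replicate n 1) xs = []"
  shows "2 ^ n * (m + 1) \<le> m + 1 + length xs"
  using assms
proof (induction n arbitrary: xs m)
  case 0
  then show ?case by simp
next
  case (Suc n)
  have "replicate (Suc n) (1::nat) = replicate n 1 @ [1]"
    by (simp add: replicate_append_same)
  with Suc.prems obtain ys zs where split: "xs = ys @ zs" "foldl fund [1] ys = []"
      "foldl fund (replicate n 1) zs = []"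
    using foldl_fund_append_eq_NilD by metis
  have "m < length ys"
    using length_gt_if_foldl_fund_omega split Suc.prems(2) by simp
  have "\<forall>z\<in>set zs. m + length ys \<le> z"
    using strict_sorted_append_ge Suc.prems split(1) by blast
  moreover have "sorted_wrt (<) zs" using Suc.prems(1) split(1) by (simp add: sorted_wrt_append)
  ultimately have IH: "2 ^ n * (m + length ys + 1) \<le> m + length ys + 1 + length zs"
    using Suc.IH split(3) by blast
  have "2 ^ Suc n * (m + 1) = 2 ^ n * (2 * m + 2)" by simp
  also have "\<dots> \<le> 2 ^ n * (m + length ys + 1)"
    using \<open>m < length ys\<close> by (intro mult_le_mono2) simp
  also have "\<dots> \<le> m + 1 + length xs" using IH split(1) by simp
  finally show ?case .
qed

lemma length_ge_if_foldl_fund_omega_square: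
  assumes "sorted_wrt (<) xs" "\<forall>x\<in>set xs. m \<le> x" "foldl fund [2] xs = []"
  shows "2 ^ m \<le> length xs"
proof (cases xs)
  case Nil
  then show ?thesis using assms by simp
next
  case (Cons x rest)
  then have "foldl fund (replicate x 1) rest = []"
    using assms fund_Suc_singleton[of 1 x] by (simp add: numeral_2_eq_2)
  moreover have "\<forall>y\<in>set rest. Suc x \<le> y" "sorted_wrt (<) rest"
    using assms(1) Cons by auto
  ultimately have "2 ^ x * (x + 2) \<le> x + 2 + length rest"
    using length_ge_if_foldl_fund_omega_times by fastforce
  also have "\<dots> \<le> (1 + length rest) * (x + 2)" by (simp add: algebra_simps)
  finally have "2 ^ x \<le> 1 + length rest" by (simp only: mult_le_cancel2)
  moreover have "2 ^ m \<le> (2::nat) ^ x" using assms(2) Cons by simp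
  ultimately have "2 ^ m \<le> 1 + length rest" by linarith
  then show ?thesis using Cons by simp
qed

lemma length_ge_if_foldl_fund_omega_cube:
  assumes "sorted_wrt (<) xs" "\<forall>x\<in>set xs. m \<le> x" "foldl fund [3] xs = []" "2 \<le> m"
  shows "2 ^ 2 ^ (m + 1) \<le> length xs"
proof (cases xs)
  case Nil
  then show ?thesis using assms by simp
next
  case (Cons k rest)
  have "foldl fund (replicate k 2) rest = []"
    using assms(3) Cons fund_Suc_singleton[of 2 k] by (simp add: numeral_3_eq_3)
  moreover obtain j where "k = j + 2"
    using assms(2,4) Cons by (metis le_add_diff_inverse2 order_trans list.set_intros(1))
  then have "replicate k (2::nat) = (replicate j 2 @ [2]) @ [2]"
    by (simp add: replicate_append_same)
  ultimately have "foldl fund ((replicate j 2 @ [2]) @ [2]) rest = []"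
    by simp
  then obtain ys zs ws where split: "rest = ys @ zs @ ws"
      "foldl fund [2] ys = []" "foldl fund [2] zs = []"
    using foldl_fund_append_eq_NilD by (metis append.assoc)
  have sorted: "sorted_wrt (<) (ys @ zs @ ws)" and bound: "\<forall>y\<in>set (ys @ zs @ ws). k + 1 \<le> y"
    using assms(1) Cons split(1) by (auto simp: Suc_le_eq)
  then have "2 ^ (k + 1) \<le> length ys"
    using length_ge_if_foldl_fund_omega_square[of ys "k + 1"] split(2)
    by (simp add: sorted_wrt_append)
  moreover have "\<forall>z\<in>set zs. k + 1 + length ys \<le> z"
    using strict_sorted_append_ge[OF sorted bound] by simp
  ultimately have "\<forall>z\<in>set zs. 2 ^ (k + 1) \<le> z" by fastforce
  moreover have "sorted_wrt (<) zs" using sorted by (simp add: sorted_wrt_append)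
  ultimately have "2 ^ 2 ^ (k + 1) \<le> length zs"
    using length_ge_if_foldl_fund_omega_square split(3) by blast
  moreover have "2 ^ 2 ^ (m + 1) \<le> (2::nat) ^ 2 ^ (k + 1)"
    using assms(2) Cons by simp
  ultimately have "2 ^ 2 ^ (m + 1) \<le> length zs" by linarith
  then show ?thesis using Cons split(1) by simp
qed

lemma card_ge_if_large_omega_cube:
  assumes "large (omega_pow 3) X" "2 \<le> Min X"
  shows "2 ^ 2 ^ (Min X + 1) \<le> card X"
proof -
  have "finite X" "X \<noteq> {}"
    using assms(1) by (auto simp: large_def omega_pow_def)
  then show ?thesis
    using length_ge_if_foldl_fund_omega_cube[of "sorted_list_of_set X" "Min X"] assms
    by (simp add: large_def omega_pow_def)
qed

lemma large_omega_iff: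
  assumes "finite Y" "Y \<noteq> {}"
  shows "large (omega_pow 1) Y \<longleftrightarrow> Min Y < card Y"
proof -
  have "foldl fund [1] (sorted_list_of_set Y)
      = foldl fund (replicate (Min Y) 0) (sorted_list_of_set (Y - {Min Y}))"
    using assms fund_Suc_singleton[of 0] by (simp add: sorted_list_of_set_nonempty)
  moreover have "card Y = Suc (card (Y - {Min Y}))"
    using card_Suc_Diff1[OF assms(1) Min_in[OF assms]] by simp
  ultimately show ?thesis
    using assms by (simp add: large_def omega_pow_def foldl_fund_replicate_0_eq_Nil_iff) linarith
qed

definition min_homogeneous :: "(nat \<Rightarrow> nat \<Rightarrow> nat) \<Rightarrow> nat set \<Rightarrow> bool" where
  "min_homogeneous P Y \<longleftrightarrow> (\<forall>x\<in>Y. \<forall>y\<in>Y. \<forall>z\<in>Y. x < y \<and> y < z \<longrightarrow> P x y = P x z)"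

lemma fallow_on_if_min_homogeneous: "min_homogeneous P Y \<Longrightarrow> fallow_on P Y"
  by (auto simp: min_homogeneous_def fallow_on_def)

lemma min_homogeneous_insert:
  assumes "min_homogeneous P Y" "\<forall>y\<in>Y. s < y \<and> P s y = c"
  shows "min_homogeneous P (insert s Y)"
  using assms unfolding min_homogeneous_def by (metis insert_iff order.asym)

lemma pigeonhole_card_fibre:
  assumes "finite A" "\<forall>x\<in>A. f x < k" "k * m < card A"
  shows "\<exists>c<k. m < card {x\<in>A. f x = c}"
proof (rule ccontr)
  assume "\<not> ?thesis"
  then have small: "\<forall>c<k. card {x\<in>A. f x = c} \<le> m" by auto
  have "A = (\<Union>c<k. {x\<in>A. f x = c})" using assms(2) by auto
  then have "card A \<le> (\<Sum>c<k. card {x\<in>A. f x = c})"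
    by (metis card_UN_le finite_lessThan)
  also have "\<dots> \<le> k * m" using sum_mono[of "{..<k}" _ "\<lambda>_. m"] small by simp
  finally show False using assms(3) by simp
qed

lemma min_homogeneous_subset_exists:
  assumes "finite S" "\<forall>x\<in>S. \<forall>y\<in>S. x < y \<longrightarrow> P x y < k" "2 \<le> k" "k ^ n \<le> card S"
  shows "\<exists>Y\<subseteq>S. Min S \<in> Y \<and> n \<le> card Y \<and> min_homogeneous P Y"
  using assms(1,2,4)
proof (induction n arbitrary: S)
  case 0
  then have "S \<noteq> {}" by auto
  with 0 show ?case by (intro exI[of _ "{Min S}"]) (auto simp: min_homogeneous_def)
next
  case (Suc n)
  have "0 < k ^ Suc n" using assms(3) by simp
  then have "S \<noteq> {}" using Suc.prems(3) by auto
  define s where "s = Min S"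
  have s: "s \<in> S" "\<forall>y\<in>S - {s}. s < y"
    using Suc.prems(1) \<open>S \<noteq> {}\<close> by (auto simp: s_def order.not_eq_order_implies_strict)
  have "k * (k ^ n - 1) < card (S - {s})"
  proof -
    have "k \<le> k ^ Suc n" using assms(3) by simp
    then have "k * (k ^ n - 1) = k ^ Suc n - k" by (simp add: right_diff_distrib')
    also have "\<dots> < k ^ Suc n - 1" using assms(3) \<open>k \<le> k ^ Suc n\<close> by linarith
    also have "\<dots> \<le> card (S - {s})" using Suc.prems(1,3) s(1) by simp
    finally show ?thesis .
  qed
  moreover have "\<forall>y\<in>S - {s}. P s y < k" using Suc.prems(2) s by blast
  ultimately obtain c where "c < k" and big: "k ^ n - 1 < card {y\<in>S - {s}. P s y = c}"
    using pigeonhole_card_fibre[of "S - {s}" "P s" k] Suc.prems(1) by blast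
  define C where "C = {y\<in>S - {s}. P s y = c}"
  have "finite C" "\<forall>x\<in>C. \<forall>y\<in>C. x < y \<longrightarrow> P x y < k" "k ^ n \<le> card C"
    using Suc.prems(1,2) big by (auto simp: C_def)
  then have "\<exists>Y\<subseteq>C. Min C \<in> Y \<and> n \<le> card Y \<and> min_homogeneous P Y"
    by (rule Suc.IH)
  then obtain Y where Y: "Y \<subseteq> C" "n \<le> card Y" "min_homogeneous P Y"
    by blast
  have "finite Y" using Y(1) \<open>finite C\<close> by (rule finite_subset)
  have "Y \<subseteq> S - {s}" "\<forall>y\<in>Y. P s y = c"
    using Y(1) unfolding C_def by blast+
  then have "s \<notin> Y" "\<forall>y\<in>Y. s < y \<and> P s y = c"
    using s(2) by auto
  then have "min_homogeneous P (insert s Y)"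
    using Y(3) by (intro min_homogeneous_insert)
  moreover have "insert s Y \<subseteq> S" using \<open>Y \<subseteq> S - {s}\<close> s(1) by blast
  moreover have "Suc n \<le> card (insert s Y)"
    using \<open>finite Y\<close> \<open>s \<notin> Y\<close> Y(2) by simp
  ultimately show ?case by (intro exI[of _ "insert s Y"]) (simp add: s_def)
qed

lemma power_le_two_power_two_power: "k ^ (k + 1) \<le> (2::nat) ^ 2 ^ (k + 1)"
proof -
  have "k * (k + 1) \<le> (2::nat) ^ (k + 1)"
  proof (induction k)
    case (Suc k)
    have "Suc k * (Suc k + 1) = k * (k + 1) + 2 * (k + 1)" by simp
    also have "\<dots> \<le> 2 ^ (k + 1) + 2 * 2 ^ k"
      using less_exp[of k] by (intro add_mono Suc.IH) arith
    finally show ?case by simp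
  qed simp
  have "k ^ (k + 1) \<le> (2 ^ k) ^ (k + 1)"
    using less_exp[of k] by (intro power_mono) simp_all
  also have "\<dots> = 2 ^ (k * (k + 1))" by (rule power_mult[symmetric])
  also have "\<dots> \<le> 2 ^ 2 ^ (k + 1)"
    using \<open>k * (k + 1) \<le> 2 ^ (k + 1)\<close> by (intro power_increasing) simp_all
  finally show ?thesis .
qed

theorem mainTheorem14:
  fixes X :: "nat set"
  assumes "finite X" and "large (omega_pow 3) X" and "Min X > 3"
  shows "fEM_large (omega_pow 1) X"
  unfolding fEM_large_def
proof (intro conjI allI impI)
  show "finite X" by fact
  fix P :: "nat \<Rightarrow> nat \<Rightarrow> nat"
  assume colouring: "\<forall>x\<in>X. \<forall>y\<in>X. x < y \<longrightarrow> P x y < Min X"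
  have "2 \<le> Min X" using assms(3) by simp
  then have "Min X ^ (Min X + 1) \<le> card X"
    using card_ge_if_large_omega_cube[OF assms(2)] power_le_two_power_two_power order_trans
    by blast
  then obtain Y where Y: "Y \<subseteq> X" "Min X \<in> Y" "Min X + 1 \<le> card Y" "min_homogeneous P Y"
    using min_homogeneous_subset_exists[OF assms(1) colouring \<open>2 \<le> Min X\<close>] by blast
  have "finite Y" "Y \<noteq> {}" using Y(1,2) assms(1) finite_subset by auto
  moreover have "Min Y = Min X"
    using Min_antimono[OF Y(1) \<open>Y \<noteq> {}\<close> assms(1)] Min_le[OF \<open>finite Y\<close> Y(2)] by linarith
  ultimately have "large (omega_pow 1) Y"
    using Y(3) large_omega_iff by simp
  with Y(1,4) fallow_on_if_min_homogeneous show "\<exists>Y\<subseteq>X. large (omega_pow 1) Y \<and> fallow_on P Y"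
    by blast
qed

end
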